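(* Fix $c\in(0,1)$ and a countable collection of languages $\mathcal{L}$. There exists an element-based generator that generates in the limit from $\mathcal{L}$ under enumerations with $c$-noise and arbitrary omissions (i.e., for every $K\in\mathcal{L}$ and every enumeration of $K$ with $c$-noise and arbitrary omissions there is $n^\star$ with $w_n\in K$ for all $n\ge n^\star$) if and only if the following condition holds: for every non-empty finite subcollection $\mathcal{L}'\subseteq\mathcal{L}$ and every enumeration $x_{1:\infty}$, either (a) there is some $L'\in\mathcal{L}'$ such that $R(L';x_{1:n})>c$ for infinitely many $n$, or (b) $|\bigcap_{L\in\mathcal{L}'}L|=\infty$.
   Context: The universe is $U=\mathbb{N}$. A language is an infinite subset of $U$; a collection is a countable family of languages. An enumeration is a sequence $x_1,x_2,\dots$ of distinct elements of $U$; $S_n=\{x_1,\dots,x_n\}$. The empirical noise rate is $R(L;x_{1:n})=\frac1n|\{t\le n:x_t\notin L\}|$. An enumeration of $L$ with $c$-noise is a sequence in which every element of $L$ appears exactly once and there is $n^\star$ with $R(L;x_{1:n})\le c$ for all $n\ge n^\star$. An enumeration of $K$ with $c$-noise and arbitrary omissions is an enumeration with $c$-noise of some $\hat K\subseteq K$ with $|\hat K|=\infty$. An element-based generator is a sequence of maps $\mathds{G}_n$ that, given $x_1,\dots,x_n$ (and knowledge of $\mathcal{L}$, but not of $K$), outputs $w_n\in U\setminus(S_n\cup\{w_1,\dots,w_{n-1}\})$. *)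

theory Defs
  imports Complex_Main "HOL-Library.Countable_Set"
begin

text \<open>Universe U = nat. Sequences are 0-indexed: the paper's x_t is x (t-1),
  so S_n = x ` {..<n} and the prefix x_1..x_n is the list map x [0..<n].\<close>

definition is_language :: "nat set \<Rightarrow> bool" where
  "is_language L \<longleftrightarrow> infinite L"

definition is_collection :: "nat set set \<Rightarrow> bool" where
  "is_collection \<L> \<longleftrightarrow> countable \<L> \<and> (\<forall>L\<in>\<L>. is_language L)"

definition is_enumeration :: "(nat \<Rightarrow> nat) \<Rightarrow> bool" where
  "is_enumeration x \<longleftrightarrow> inj x"

definition S_set :: "(nat \<Rightarrow> nat) \<Rightarrow> nat \<Rightarrow> nat set" where
  "S_set x n = x ` {..<n}"

definition prefix :: "(nat \<Rightarrow> nat) \<Rightarrow> nat \<Rightarrow> nat list" where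
  "prefix x n = map x [0..<n]"

definition noise_rate :: "nat set \<Rightarrow> (nat \<Rightarrow> nat) \<Rightarrow> nat \<Rightarrow> real" where
  "noise_rate L x n = real (card {t. t < n \<and> x t \<notin> L}) / real n"

definition enum_with_noise :: "real \<Rightarrow> nat set \<Rightarrow> (nat \<Rightarrow> nat) \<Rightarrow> bool" where
  "enum_with_noise c L x \<longleftrightarrow> is_enumeration x \<and> L \<subseteq> range x \<and>
     (\<exists>n0. \<forall>n\<ge>n0. noise_rate L x n \<le> c)"

definition enum_with_noise_omissions :: "real \<Rightarrow> nat set \<Rightarrow> (nat \<Rightarrow> nat) \<Rightarrow> bool" where
  "enum_with_noise_omissions c K x \<longleftrightarrow>
     (\<exists>Khat. Khat \<subseteq> K \<and> infinite Khat \<and> enum_with_noise c Khat x)"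

text \<open>An element-based generator: G maps the prefix x_1..x_n (n \<ge> 1) to w_n.
  Knowledge of the collection is allowed since G is chosen after the collection.\<close>
definition gen_out :: "(nat list \<Rightarrow> nat) \<Rightarrow> (nat \<Rightarrow> nat) \<Rightarrow> nat \<Rightarrow> nat" where
  "gen_out G x n = G (prefix x n)"

definition is_generator :: "(nat list \<Rightarrow> nat) \<Rightarrow> bool" where
  "is_generator G \<longleftrightarrow> (\<forall>x. is_enumeration x \<longrightarrow> (\<forall>n\<ge>1.
      gen_out G x n \<notin> S_set x n \<and>
      (\<forall>m. 1 \<le> m \<and> m < n \<longrightarrow> gen_out G x m \<noteq> gen_out G x n)))"

definition generates_in_limit_noise_omissions ::
  "real \<Rightarrow> nat set set \<Rightarrow> (nat list \<Rightarrow> nat) \<Rightarrow> bool" where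
  "generates_in_limit_noise_omissions c \<L> G \<longleftrightarrow>
     (\<forall>K\<in>\<L>. \<forall>x. enum_with_noise_omissions c K x \<longrightarrow>
        (\<exists>n0. \<forall>n\<ge>n0. gen_out G x n \<in> K))"

end

theory Submission
  imports Defs
begin

(* Necessity: if every language of a finite subcollection has eventually noise rate at most c
   along x, then, since c < 1, x meets each of them infinitely often, so x enumerates each of
   them with c-noise and omissions; a successful generator therefore eventually outputs
   elements of all of them at once, and its outputs are distinct, so the intersection is
   infinite.

   Sufficiency: enumerate the collection as L_0, L_1, ... and call L_i trusted at level m after
   the prefix x_1..x_n if i plus the number of prefix lengths below n at which L_i has noise
   rate above c is smaller than m. The generator takes the largest level m <= n whose trusted
   languages have an infinite intersection and outputs a fresh element of that intersection.
   If x enumerates L_k with c-noise and omissions, L_k has only finitely many noisy prefixes,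
   so it is trusted at some fixed level M; languages that are noisy infinitely often are
   eventually no longer trusted at level M, and the condition makes the intersection of the
   remaining ones infinite. Hence eventually the chosen level is at least M and every output
   lies in L_k. Neither direction needs 0 < c. *)

lemma noise_rate_cong:
  assumes "\<And>t. t < n \<Longrightarrow> x t = y t"
  shows "noise_rate L x n = noise_rate L y n"
proof -
  have "{t. t < n \<and> x t \<notin> L} = {t. t < n \<and> y t \<notin> L}" using assms by auto
  then show ?thesis unfolding noise_rate_def by simp
qed

lemma noise_rate_antimono:
  assumes "L \<subseteq> L'"
  shows "noise_rate L' x n \<le> noise_rate L x n"
  unfolding noise_rate_def using assms by (intro divide_right_mono of_nat_mono card_mono) auto

lemma noise_rate_Int_range: "noise_rate (L \<inter> range x) x n = noise_rate L x n"
proof -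
  have "{t. t < n \<and> x t \<notin> L \<inter> range x} = {t. t < n \<and> x t \<notin> L}" by auto
  then show ?thesis unfolding noise_rate_def by simp
qed

lemma card_lessThan_partition:
  "card {t. t < n \<and> P t} + card {t. t < n \<and> \<not> P t} = (n::nat)"
proof -
  have "card {t. t < n \<and> P t} + card {t. t < n \<and> \<not> P t} =
      card ({t. t < n \<and> P t} \<union> {t. t < n \<and> \<not> P t})"
    by (intro card_Un_disjoint [symmetric]) auto
  also have "{t. t < n \<and> P t} \<union> {t. t < n \<and> \<not> P t} = {..<n}" by auto
  finally show ?thesis by simp
qed

lemma infinite_Int_range_if_noise_rate_le:
  fixes c :: real
  assumes "c < 1" and "inj x" and noise: "\<forall>n\<ge>n0. noise_rate L x n \<le> c"
  shows "infinite (L \<inter> range x)"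
proof
  assume "finite (L \<inter> range x)"
  then have "finite (x -` (L \<inter> range x))" using \<open>inj x\<close> by (rule finite_vimageI)
  moreover have "x -` (L \<inter> range x) = {t. x t \<in> L}" by auto
  ultimately have finite_hits: "finite {t. x t \<in> L}" by simp
  define h where "h = card {t. x t \<in> L}"
  define n where "n = max (Suc n0) (Suc (nat \<lceil>real h / (1 - c)\<rceil>))"
  have "n \<ge> n0" "n > 0" unfolding n_def by auto
  have "real h / (1 - c) < real n" unfolding n_def by linarith
  then have n_large: "real h < real n * (1 - c)" using \<open>c < 1\<close> by (simp add: field_simps)
  have hits: "card {t. t < n \<and> x t \<in> L} \<le> h"
    unfolding h_def using finite_hits by (intro card_mono) auto
  have "noise_rate L x n \<le> c" using noise \<open>n \<ge> n0\<close> by simp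
  then have misses: "real (card {t. t < n \<and> x t \<notin> L}) \<le> c * real n"
    using \<open>n > 0\<close> unfolding noise_rate_def by (simp add: divide_le_eq)
  have "real (card {t. t < n \<and> x t \<in> L}) + real (card {t. t < n \<and> x t \<notin> L}) = real n"
    using card_lessThan_partition [of n "\<lambda>t. x t \<in> L"] by (metis of_nat_add)
  then show False using n_large hits misses by (simp add: algebra_simps)
qed

lemma enum_with_noise_omissions_if_noise_rate_le:
  assumes "c < 1" and "is_enumeration x" and "\<forall>n\<ge>n0. noise_rate L x n \<le> c"
  shows "enum_with_noise_omissions c L x"
proof -
  have "infinite (L \<inter> range x)"
    using infinite_Int_range_if_noise_rate_le assms unfolding is_enumeration_def by blast
  then show ?thesis
    unfolding enum_with_noise_omissions_def enum_with_noise_def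
    using assms(2,3) by (intro exI [of _ "L \<inter> range x"]) (auto simp: noise_rate_Int_range)
qed

lemma finite_noisy_if_enum_with_noise_omissions:
  assumes "enum_with_noise_omissions c K x"
  shows "finite {n. c < noise_rate K x n}"
proof -
  obtain K' n0 where "K' \<subseteq> K" and noise: "\<forall>n\<ge>n0. noise_rate K' x n \<le> c"
    using assms unfolding enum_with_noise_omissions_def enum_with_noise_def by blast
  have quiet: "noise_rate K x n \<le> c" if "n \<ge> n0" for n
    using order_trans [OF noise_rate_antimono [OF \<open>K' \<subseteq> K\<close>] noise [rule_format, OF that]] .
  have "{n. c < noise_rate K x n} \<subseteq> {..<n0}"
  proof
    fix n assume "n \<in> {n. c < noise_rate K x n}"
    then show "n \<in> {..<n0}" using quiet [of n] by (cases "n0 \<le> n") auto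
  qed
  then show ?thesis by (rule finite_subset) simp
qed

lemma gen_out_inj_on:
  assumes "is_generator G" and "is_enumeration x"
  shows "inj_on (gen_out G x) {1..}"
proof (rule linorder_inj_onI')
  fix m n :: nat assume "m \<in> {1..}" "n \<in> {1..}" "m < n"
  then show "gen_out G x m \<noteq> gen_out G x n" using assms unfolding is_generator_def by auto
qed

lemma infinite_Inter_if_generates:
  assumes "c < 1" and "is_generator G" and "generates_in_limit_noise_omissions c \<L> G"
    and "\<L>' \<subseteq> \<L>" and "finite \<L>'" and "is_enumeration x"
    and rarely_noisy: "\<forall>L\<in>\<L>'. \<not> (\<exists>\<^sub>\<infinity>n. c < noise_rate L x n)"
  shows "infinite (\<Inter>\<L>')"
proof -
  have quiet: "\<forall>\<^sub>F n in sequentially. noise_rate L x n \<le> c" if "L \<in> \<L>'" for L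
    using rarely_noisy that by (auto simp: not_frequently not_less cofinite_eq_sequentially)
  have eventually_in: "\<forall>\<^sub>F n in sequentially. gen_out G x n \<in> L" if L: "L \<in> \<L>'" for L
  proof -
    obtain n0 where "\<forall>n\<ge>n0. noise_rate L x n \<le> c"
      using quiet [OF L] unfolding eventually_sequentially by blast
    then have "enum_with_noise_omissions c L x"
      using enum_with_noise_omissions_if_noise_rate_le assms(1,6) by blast
    then show ?thesis
      using assms(3,4) L unfolding generates_in_limit_noise_omissions_def eventually_sequentially
      by blast
  qed
  have "\<forall>\<^sub>F n in sequentially. \<forall>L\<in>\<L>'. gen_out G x n \<in> L"
    using eventually_in by (intro eventually_ball_finite [OF \<open>finite \<L>'\<close>]) blast
  then have "\<forall>\<^sub>F n in sequentially. gen_out G x n \<in> \<Inter>\<L>'" by simp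
  then obtain N where N: "\<And>n. n \<ge> N \<Longrightarrow> gen_out G x n \<in> \<Inter>\<L>'"
    unfolding eventually_sequentially by blast
  have "inj_on (gen_out G x) {max N 1..}"
    using gen_out_inj_on [OF assms(2,6)] by (rule inj_on_subset) auto
  then have "infinite (gen_out G x ` {max N 1..})" using finite_imageD infinite_Ici by blast
  moreover have "gen_out G x ` {max N 1..} \<subseteq> \<Inter>\<L>'" using N by auto
  ultimately show ?thesis using finite_subset by blast
qed

(* A generator sees only the current prefix, so to keep its outputs distinct it recomputes
   its outputs on all shorter prefixes. *)
function fresh_gen :: "(nat list \<Rightarrow> nat set) \<Rightarrow> nat list \<Rightarrow> nat" where
  "fresh_gen A xs = (LEAST w. w \<in> A xs \<and> w \<notin> set xs \<and>
     w \<notin> set (map (\<lambda>m. fresh_gen A (take m xs)) [1..<length xs]))"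
  by auto
termination by (relation "measure (length \<circ> snd)") auto

declare fresh_gen.simps [simp del]

lemma fresh_gen_spec:
  assumes "infinite (A xs)"
  shows "fresh_gen A xs \<in> A xs" and "fresh_gen A xs \<notin> set xs"
    and "\<And>m. 1 \<le> m \<Longrightarrow> m < length xs \<Longrightarrow> fresh_gen A xs \<noteq> fresh_gen A (take m xs)"
proof -
  let ?earlier = "set (map (\<lambda>m. fresh_gen A (take m xs)) [1..<length xs])"
  have "infinite (A xs - set xs - ?earlier)" using assms by auto
  then obtain w where "w \<in> A xs - set xs - ?earlier" using infinite_imp_nonempty by blast
  then have "\<exists>w. w \<in> A xs \<and> w \<notin> set xs \<and> w \<notin> ?earlier" by blast
  then have least: "fresh_gen A xs \<in> A xs \<and> fresh_gen A xs \<notin> set xs \<and> fresh_gen A xs \<notin> ?earlier"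
    unfolding fresh_gen.simps [of A xs] by (rule LeastI_ex)
  then show "fresh_gen A xs \<in> A xs" and "fresh_gen A xs \<notin> set xs" by blast+
  show "fresh_gen A xs \<noteq> fresh_gen A (take m xs)" if "1 \<le> m" and "m < length xs" for m
    using least that by auto
qed

lemma length_prefix [simp]: "length (prefix x n) = n"
  by (simp add: prefix_def)

lemma set_prefix: "set (prefix x n) = S_set x n"
  by (auto simp: prefix_def S_set_def)

lemma prefix_take: "m \<le> n \<Longrightarrow> take m (prefix x n) = prefix x m"
  by (simp add: prefix_def take_map)

lemma fresh_gen_is_generator:
  assumes "\<And>xs. infinite (A xs)"
  shows "is_generator (fresh_gen A)"
  unfolding is_generator_def
proof (intro allI impI conjI)
  fix x n m
  show "gen_out (fresh_gen A) x n \<notin> S_set x n"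
    using fresh_gen_spec(2) [of A "prefix x n", OF assms] by (simp add: gen_out_def set_prefix)
  assume "1 \<le> m \<and> m < n"
  then show "gen_out (fresh_gen A) x m \<noteq> gen_out (fresh_gen A) x n"
    using fresh_gen_spec(3) [of A "prefix x n" m, OF assms] by (auto simp: gen_out_def prefix_take)
qed

(* nth xs is unspecified beyond the list, but the noise rate at m < length xs only reads
   the first m entries. *)
definition noisy_count :: "real \<Rightarrow> nat set \<Rightarrow> nat list \<Rightarrow> nat" where
  "noisy_count c L xs = card {m. m < length xs \<and> c < noise_rate L (nth xs) m}"

definition trusted :: "real \<Rightarrow> (nat \<Rightarrow> nat set) \<Rightarrow> nat list \<Rightarrow> nat \<Rightarrow> nat set" where
  "trusted c Lf xs m = {i. i + noisy_count c (Lf i) xs < m}"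

definition consistent_level :: "real \<Rightarrow> (nat \<Rightarrow> nat set) \<Rightarrow> nat list \<Rightarrow> nat \<Rightarrow> bool" where
  "consistent_level c Lf xs m \<longleftrightarrow> infinite (\<Inter>i\<in>trusted c Lf xs m. Lf i)"

definition top_level :: "real \<Rightarrow> (nat \<Rightarrow> nat set) \<Rightarrow> nat list \<Rightarrow> nat" where
  "top_level c Lf xs = Max {m. m \<le> length xs \<and> consistent_level c Lf xs m}"

definition candidates :: "real \<Rightarrow> (nat \<Rightarrow> nat set) \<Rightarrow> nat list \<Rightarrow> nat set" where
  "candidates c Lf xs = (\<Inter>i\<in>trusted c Lf xs (top_level c Lf xs). Lf i)"

lemma noisy_count_prefix:
  "noisy_count c L (prefix x n) = card {m. m < n \<and> c < noise_rate L x m}"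
proof -
  have "noise_rate L (nth (prefix x n)) m = noise_rate L x m" if "m < n" for m
    using that by (intro noise_rate_cong) (simp add: prefix_def)
  then have "{m. m < length (prefix x n) \<and> c < noise_rate L (nth (prefix x n)) m} =
      {m. m < n \<and> c < noise_rate L x m}"
    by auto
  then show ?thesis unfolding noisy_count_def by simp
qed

lemma trusted_subset_lessThan: "trusted c Lf xs m \<subseteq> {..<m}"
  by (auto simp: trusted_def)

lemma trusted_mono: "m \<le> m' \<Longrightarrow> trusted c Lf xs m \<subseteq> trusted c Lf xs m'"
  by (auto simp: trusted_def)

lemma
  shows top_level_consistent: "consistent_level c Lf xs (top_level c Lf xs)"
    and le_top_level: "m \<le> length xs \<Longrightarrow> consistent_level c Lf xs m \<Longrightarrow> m \<le> top_level c Lf xs"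
proof -
  let ?levels = "{m. m \<le> length xs \<and> consistent_level c Lf xs m}"
  have "finite ?levels" by (rule finite_subset [of _ "{..length xs}"]) auto
  moreover have "0 \<in> ?levels" by (simp add: consistent_level_def trusted_def)
  ultimately show "consistent_level c Lf xs (top_level c Lf xs)"
    unfolding top_level_def using Max_in by blast
  show "m \<le> top_level c Lf xs" if "m \<le> length xs" and "consistent_level c Lf xs m"
    unfolding top_level_def using \<open>finite ?levels\<close> that by (intro Max_ge) auto
qed

lemma infinite_candidates: "infinite (candidates c Lf xs)"
  using top_level_consistent unfolding candidates_def consistent_level_def .

lemma candidates_subset:
  assumes "k \<in> trusted c Lf xs m" and "m \<le> length xs" and "consistent_level c Lf xs m"
  shows "candidates c Lf xs \<subseteq> Lf k"
proof -
  have "k \<in> trusted c Lf xs (top_level c Lf xs)"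
    using assms trusted_mono le_top_level by blast
  then show ?thesis unfolding candidates_def by blast
qed

lemma eventually_card_less_ge:
  assumes "infinite {m::nat. P m}"
  shows "\<forall>\<^sub>F n in sequentially. M \<le> card {m. m < n \<and> P m}"
proof -
  obtain F where F: "F \<subseteq> {m. P m}" "finite F" "card F = M"
    using infinite_arbitrarily_large [OF assms] by blast
  then obtain N where "F \<subseteq> {..<N}" using finite_nat_iff_bounded by blast
  have "M \<le> card {m. m < n \<and> P m}" if "n \<ge> N" for n
  proof -
    have "F \<subseteq> {m. m < n \<and> P m}" using F(1) \<open>F \<subseteq> {..<N}\<close> that by auto
    from card_mono [OF _ this] show ?thesis using F(3) by simp
  qed
  then show ?thesis unfolding eventually_sequentially by blast
qed

lemma eventually_candidates_subset:
  assumes cond: "\<And>I. finite I \<Longrightarrow> I \<noteq> {} \<Longrightarrow>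
      (\<exists>i\<in>I. infinite {n. c < noise_rate (Lf i) x n}) \<or> infinite (\<Inter>i\<in>I. Lf i)"
    and finite_noisy: "finite {n. c < noise_rate (Lf k) x n}"
  shows "\<forall>\<^sub>F n in sequentially. candidates c Lf (prefix x n) \<subseteq> Lf k"
proof -
  define M where "M = Suc (k + card {n. c < noise_rate (Lf k) x n})"
  have k_trusted: "k \<in> trusted c Lf (prefix x n) M" for n
  proof -
    have "card {m. m < n \<and> c < noise_rate (Lf k) x m} \<le> card {n. c < noise_rate (Lf k) x n}"
      by (rule card_mono [OF finite_noisy]) auto
    then show ?thesis unfolding trusted_def M_def noisy_count_prefix by simp
  qed
  have "\<forall>\<^sub>F n in sequentially. \<forall>i\<in>{..<M}.
      infinite {n. c < noise_rate (Lf i) x n} \<longrightarrow> M \<le> card {m. m < n \<and> c < noise_rate (Lf i) x m}"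
    using eventually_card_less_ge by (intro eventually_ball_finite) auto
  then have "\<forall>\<^sub>F n in sequentially. \<forall>i\<in>trusted c Lf (prefix x n) M.
      finite {n. c < noise_rate (Lf i) x n}"
  proof eventually_elim
    case (elim n)
    show ?case
    proof
      fix i assume "i \<in> trusted c Lf (prefix x n) M"
      then have "i < M" and few: "card {m. m < n \<and> c < noise_rate (Lf i) x m} < M"
        by (auto simp: trusted_def noisy_count_prefix)
      show "finite {n. c < noise_rate (Lf i) x n}"
      proof (rule ccontr)
        assume "infinite {n. c < noise_rate (Lf i) x n}"
        then show False using elim \<open>i < M\<close> few by (simp add: not_le [symmetric])
      qed
    qed
  qed
  then show ?thesis
    using eventually_ge_at_top [of M]
  proof eventually_elim
    case (elim n)
    let ?T = "trusted c Lf (prefix x n) M"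
    have "finite ?T" using finite_subset [OF trusted_subset_lessThan] by blast
    then have "infinite (\<Inter>i\<in>?T. Lf i)" using cond [of ?T] elim(1) k_trusted by blast
    then have "consistent_level c Lf (prefix x n) M" by (simp add: consistent_level_def)
    then show ?case using candidates_subset [OF k_trusted] elim(2) by simp
  qed
qed

lemma eventually_fresh_candidates_in:
  assumes "countable \<L>" and "K \<in> \<L>" and "enum_with_noise_omissions c K x"
    and cond: "\<And>\<L>'. \<L>' \<subseteq> \<L> \<Longrightarrow> finite \<L>' \<Longrightarrow> \<L>' \<noteq> {} \<Longrightarrow>
      (\<exists>L\<in>\<L>'. \<exists>\<^sub>\<infinity>n. c < noise_rate L x n) \<or> infinite (\<Inter>\<L>')"
  shows "\<exists>n0. \<forall>n\<ge>n0. gen_out (fresh_gen (candidates c (from_nat_into \<L>))) x n \<in> K"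
proof -
  let ?Lf = "from_nat_into \<L>"
  obtain k where k: "?Lf k = K" using from_nat_into_surj [OF assms(1,2)] by blast
  have "\<forall>\<^sub>F n in sequentially. candidates c ?Lf (prefix x n) \<subseteq> ?Lf k"
  proof (rule eventually_candidates_subset)
    fix I :: "nat set" assume "finite I" and "I \<noteq> {}"
    have "?Lf ` I \<subseteq> \<L>" using \<open>K \<in> \<L>\<close> by (auto intro: from_nat_into)
    then have "(\<exists>L\<in>?Lf ` I. \<exists>\<^sub>\<infinity>n. c < noise_rate L x n) \<or> infinite (\<Inter>(?Lf ` I))"
      by (rule cond) (use \<open>finite I\<close> \<open>I \<noteq> {}\<close> in auto)
    then show "(\<exists>i\<in>I. infinite {n. c < noise_rate (?Lf i) x n}) \<or> infinite (\<Inter>i\<in>I. ?Lf i)"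
      by (simp add: INFM_iff_infinite)
  next
    show "finite {n. c < noise_rate (?Lf k) x n}"
      unfolding k by (rule finite_noisy_if_enum_with_noise_omissions [OF assms(3)])
  qed
  then obtain N where N: "\<And>n. n \<ge> N \<Longrightarrow> candidates c ?Lf (prefix x n) \<subseteq> K"
    unfolding eventually_sequentially k by blast
  have "gen_out (fresh_gen (candidates c ?Lf)) x n \<in> candidates c ?Lf (prefix x n)" for n
    unfolding gen_out_def by (rule fresh_gen_spec(1) [OF infinite_candidates])
  then show ?thesis using N by blast
qed

theorem theorem5p4:
  fixes c :: real and \<L> :: "nat set set"
  assumes "0 < c" and "c < 1" and "is_collection \<L>"
  shows "(\<exists>G. is_generator G \<and> generates_in_limit_noise_omissions c \<L> G) \<longleftrightarrow>
    (\<forall>\<L>'. \<L>' \<subseteq> \<L> \<and> finite \<L>' \<and> \<L>' \<noteq> {} \<longrightarrow>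
      (\<forall>x. is_enumeration x \<longrightarrow>
        (\<exists>L'\<in>\<L>'. \<exists>\<^sub>\<infinity>n. noise_rate L' x n > c) \<or> infinite (\<Inter>\<L>')))"
    (is "?generable \<longleftrightarrow> ?condition")
proof
  assume ?generable
  then obtain G where G: "is_generator G" and gen: "generates_in_limit_noise_omissions c \<L> G"
    by blast
  show ?condition
  proof (intro allI impI)
    fix \<L>' x assume sub: "\<L>' \<subseteq> \<L> \<and> finite \<L>' \<and> \<L>' \<noteq> {}" and "is_enumeration x"
    show "(\<exists>L'\<in>\<L>'. \<exists>\<^sub>\<infinity>n. noise_rate L' x n > c) \<or> infinite (\<Inter>\<L>')"
    proof (cases "\<exists>L'\<in>\<L>'. \<exists>\<^sub>\<infinity>n. noise_rate L' x n > c")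
      case False
      then have "infinite (\<Inter>\<L>')"
        using sub by (intro infinite_Inter_if_generates [OF \<open>c < 1\<close> G gen _ _ \<open>is_enumeration x\<close>]) auto
      then show ?thesis ..
    qed simp
  qed
next
  assume cond: ?condition
  have "countable \<L>" using assms(3) by (simp add: is_collection_def)
  let ?G = "fresh_gen (candidates c (from_nat_into \<L>))"
  have "generates_in_limit_noise_omissions c \<L> ?G"
    unfolding generates_in_limit_noise_omissions_def
  proof (intro ballI allI impI)
    fix K x assume K: "K \<in> \<L>" and enum: "enum_with_noise_omissions c K x"
    have "is_enumeration x"
      using enum by (auto simp: enum_with_noise_omissions_def enum_with_noise_def)
    show "\<exists>n0. \<forall>n\<ge>n0. gen_out ?G x n \<in> K"
      by (rule eventually_fresh_candidates_in [OF \<open>countable \<L>\<close> K enum])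
        (use cond \<open>is_enumeration x\<close> in simp)
  qed
  moreover have "is_generator ?G" by (rule fresh_gen_is_generator [OF infinite_candidates])
  ultimately show ?generable by blast
qed

end
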